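(* Let $u$ be a coherent utility on $L^0$ whose determining set $\mathcal{D}$ is $L^1$-closed and uniformly integrable (as a set of densities), and let $W\in L^1_s(\mathcal{D})$. Then $\mathcal{X}_\mathcal{D}(W)\neq\emptyset$.
   Context: Let $(\Omega,\mathcal{F},\mathsf{P})$ be a probability space, $L^0$ the space of all real random variables, and $\mathcal{P}$ the set of probability measures on $\mathcal{F}$ absolutely continuous with respect to $\mathsf{P}$; measures $\mathsf{Q}\in\mathcal{P}$ are identified with their densities $d\mathsf{Q}/d\mathsf{P}\in L^1(\mathsf{P})$. For $\mathsf{Q}\in\mathcal{P}$ and $X\in L^0$, $\mathsf{E}_\mathsf{Q}X:=\mathsf{E}_\mathsf{Q}X^+-\mathsf{E}_\mathsf{Q}X^-$ with the convention $\infty-\infty=-\infty$. A coherent utility on $L^0$ is a map $u:L^0\to[-\infty,\infty]$ of the form $u(X)=\inf_{\mathsf{Q}\in\mathcal{D}}\mathsf{E}_\mathsf{Q}X$ for a nonempty $\mathcal{D}\subseteq\mathcal{P}$; its determining set is the largest such set, $\{\mathsf{Q}\in\mathcal{P}:\mathsf{E}_\mathsf{Q}X\ge u(X)\ \forall X\in L^0\}$. $L^1_s(\mathcal{D})=\{X\in L^0:\lim_{n\to\infty}\sup_{\mathsf{Q}\in\mathcal{D}}\mathsf{E}_\mathsf{Q}|X|I(|X|>n)=0\}$. The set of extreme measures for $W$ is $\mathcal{X}_\mathcal{D}(W)=\{\mathsf{Q}\in\mathcal{D}:\mathsf{E}_\mathsf{Q}W=u(W)\in(-\infty,\infty)\}$.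 *)

theory Defs
  imports "HOL-Probability.Probability"
begin

text \<open>Densities dQ/dP of probability measures Q absolutely continuous w.r.t. P = M.\<close>
definition densities :: "'a measure \<Rightarrow> ('a \<Rightarrow> real) set" where
  "densities M = {q \<in> borel_measurable M. (\<forall>x\<in>space M. 0 \<le> q x) \<and>
                     integrable M q \<and> (\<integral>x. q x \<partial>M) = 1}"

text \<open>E_Q X = E_Q X^+ - E_Q X^-, with the convention \<infinity> - \<infinity> = -\<infinity>.\<close>
definition EQ :: "'a measure \<Rightarrow> ('a \<Rightarrow> real) \<Rightarrow> ('a \<Rightarrow> real) \<Rightarrow> ereal" where
  "EQ M q X = (let a = enn2ereal (\<integral>\<^sup>+x. ennreal (q x * max (X x) 0) \<partial>M);
                   b = enn2ereal (\<integral>\<^sup>+x. ennreal (q x * max (- X x) 0) \<partial>M)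
               in if a = \<infinity> \<and> b = \<infinity> then - \<infinity> else a - b)"

text \<open>Coherent utility on L^0 (the random variables = Borel measurable real functions).\<close>
definition coherent_utility :: "'a measure \<Rightarrow> (('a \<Rightarrow> real) \<Rightarrow> ereal) \<Rightarrow> bool" where
  "coherent_utility M u \<longleftrightarrow> (\<exists>D. D \<subseteq> densities M \<and> D \<noteq> {} \<and>
      (\<forall>X\<in>borel_measurable M. u X = (INF q\<in>D. EQ M q X)))"

text \<open>Determining set: the largest set of representing measures.\<close>
definition determining_set :: "'a measure \<Rightarrow> (('a \<Rightarrow> real) \<Rightarrow> ereal) \<Rightarrow> ('a \<Rightarrow> real) set" where
  "determining_set M u = {q \<in> densities M. \<forall>X\<in>borel_measurable M. EQ M q X \<ge> u X}"

text \<open>D is closed in L^1 (densities identified up to P-a.e. equality).\<close>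
definition L1_closed :: "'a measure \<Rightarrow> ('a \<Rightarrow> real) set \<Rightarrow> bool" where
  "L1_closed M D \<longleftrightarrow> (\<forall>qs q. (\<forall>n. qs n \<in> D) \<longrightarrow> integrable M q \<longrightarrow>
      (\<lambda>n. \<integral>x. \<bar>qs n x - q x\<bar> \<partial>M) \<longlonglongrightarrow> 0 \<longrightarrow>
      (\<exists>q'\<in>D. AE x in M. q' x = q x))"

definition unif_integrable :: "'a measure \<Rightarrow> ('a \<Rightarrow> real) set \<Rightarrow> bool" where
  "unif_integrable M D \<longleftrightarrow>
     (\<lambda>n::nat. SUP q\<in>D. \<integral>\<^sup>+x. ennreal (q x * indicator {y. q y > real n} x) \<partial>M) \<longlonglongrightarrow> 0"

definition L1s :: "'a measure \<Rightarrow> ('a \<Rightarrow> real) set \<Rightarrow> ('a \<Rightarrow> real) set" where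
  "L1s M D = {X \<in> borel_measurable M.
     (\<lambda>n::nat. SUP q\<in>D. \<integral>\<^sup>+x. ennreal (q x * \<bar>X x\<bar> * indicator {y. \<bar>X y\<bar> > real n} x) \<partial>M)
        \<longlonglongrightarrow> 0}"

definition extreme_measures :: "'a measure \<Rightarrow> (('a \<Rightarrow> real) \<Rightarrow> ereal) \<Rightarrow> ('a \<Rightarrow> real) set
    \<Rightarrow> ('a \<Rightarrow> real) \<Rightarrow> ('a \<Rightarrow> real) set" where
  "extreme_measures M u D W = {q \<in> D. EQ M q W = u W \<and> \<bar>u W\<bar> \<noteq> \<infinity>}"

end

theory Submission
  imports Defs
begin

text \<open>The map q \<mapsto> \<integral> q W is affine on the determining set D, which is convex, and
  W \<in> L^1_s(D) makes it bounded below on D and continuous for L^1 convergence of densities in D.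
  Let c be its infimum over D, and in each of the nested convex sets
  S_n = {q \<in> D. \<integral> q W \<le> c + 1/(n+1)} pick a near-minimizer p_n of the strictly convex
  functional q \<mapsto> \<integral> 1/(1+q). Midpoints of p_n and p_k (n \<le> k) stay in S_n, so the Jensen gap of
  1/(1+t) between p_n and p_k integrates to almost nothing; on {p_n, p_k \<le> N} this controls
  |p_n - p_k|, and uniform integrability of D controls the rest. Hence (p_n) is Cauchy in L^1, its
  limit lies in D because D is closed, and by continuity it attains c, which makes it an extreme
  measure.\<close>

section \<open>Expectations under densities and the determining set\<close>

lemma densitiesD:
  assumes "q \<in> densities M"
  shows "q \<in> borel_measurable M" "\<And>x. x \<in> space M \<Longrightarrow> 0 \<le> q x" "integrable M q"
    "(\<integral>x. q x \<partial>M) = 1"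
  using assms unfolding densities_def by auto

lemma densities_midpoint:
  assumes "q1 \<in> densities M" "q2 \<in> densities M"
  shows "(\<lambda>x. (q1 x + q2 x) / 2) \<in> densities M"
  using densitiesD[OF assms(1)] densitiesD[OF assms(2)] unfolding densities_def by auto

lemma EQ_eq_integral:
  assumes q: "q \<in> densities M" and int: "integrable M (\<lambda>x. q x * X x)"
  shows "EQ M q X = ereal (\<integral>x. q x * X x \<partial>M)"
proof -
  have pos: "(\<integral>\<^sup>+x. ennreal (q x * max (Y x) 0) \<partial>M) = ennreal (\<integral>x. max (q x * Y x) 0 \<partial>M)"
    if "integrable M (\<lambda>x. q x * Y x)" for Y
  proof -
    have "(\<integral>\<^sup>+x. ennreal (q x * max (Y x) 0) \<partial>M) = (\<integral>\<^sup>+x. ennreal (max (q x * Y x) 0) \<partial>M)"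
      by (rule nn_integral_cong) (use densitiesD(2)[OF q] in \<open>fastforce simp: max_def mult_le_0_iff\<close>)
    also have "\<dots> = ennreal (\<integral>x. max (q x * Y x) 0 \<partial>M)"
      by (rule nn_integral_eq_integral) (use that in auto)
    finally show ?thesis .
  qed
  have "(\<integral>x. q x * X x \<partial>M) = (\<integral>x. max (q x * X x) 0 - max (- (q x * X x)) 0 \<partial>M)"
    by (rule Bochner_Integration.integral_cong) (auto simp: max_def)
  also have "\<dots> = (\<integral>x. max (q x * X x) 0 \<partial>M) - (\<integral>x. max (- (q x * X x)) 0 \<partial>M)"
    using int by simp
  finally show ?thesis
    using pos[of X] pos[of "\<lambda>x. - X x"] int unfolding EQ_def Let_def
    by (simp add: integral_nonneg_AE)
qed

definition pos_neg_diff :: "ennreal \<Rightarrow> ennreal \<Rightarrow> ereal" where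
  "pos_neg_diff a b = (if a = \<top> \<and> b = \<top> then - \<infinity> else enn2ereal a - enn2ereal b)"

lemma EQ_eq_pos_neg_diff:
  "EQ M q X = pos_neg_diff (\<integral>\<^sup>+x. ennreal (q x * max (X x) 0) \<partial>M) (\<integral>\<^sup>+x. ennreal (q x * max (- X x) 0) \<partial>M)"
  unfolding EQ_def pos_neg_diff_def Let_def by simp

lemma pos_neg_diff_midpoint_ge:
  fixes a b a1 a2 b1 b2 :: ennreal
  assumes a: "a * 2 = a1 + a2" and b: "b * 2 = b1 + b2"
  shows "min (pos_neg_diff a1 b1) (pos_neg_diff a2 b2) \<le> pos_neg_diff a b"
proof (cases "b = \<top>")
  case True
  then have "b1 = \<top> \<or> b2 = \<top>" using b by (metis ennreal_add_eq_top ennreal_top_mult zero_neq_numeral)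
  then show ?thesis by (cases a1; cases a2) (auto simp: pos_neg_diff_def min_def)
next
  case b_fin: False
  then have "b1 \<noteq> \<top>" "b2 \<noteq> \<top>" using b by (auto simp: ennreal_mult_eq_top_iff)
  then obtain y y1 y2 where y: "b = ennreal y" "b1 = ennreal y1" "b2 = ennreal y2" "0 \<le> y" "0 \<le> y1" "0 \<le> y2"
    using b_fin by (metis ennreal_cases)
  show ?thesis
  proof (cases "a = \<top>")
    case True
    then show ?thesis using y by (simp add: pos_neg_diff_def)
  next
    case a_fin: False
    then have "a1 \<noteq> \<top>" "a2 \<noteq> \<top>" using a by (auto simp: ennreal_mult_eq_top_iff)
    then obtain x x1 x2 where x: "a = ennreal x" "a1 = ennreal x1" "a2 = ennreal x2" "0 \<le> x" "0 \<le> x1" "0 \<le> x2"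
      using a_fin by (metis ennreal_cases)
    have "x * 2 = x1 + x2" "y * 2 = y1 + y2"
      using a b x y by (simp_all flip: ennreal_numeral ennreal_mult ennreal_plus)
    then show ?thesis using x y by (simp add: pos_neg_diff_def min_def)
  qed
qed

lemma nn_integral_midpoint_mult:
  assumes q1: "q1 \<in> densities M" and q2: "q2 \<in> densities M"
    and f[measurable]: "f \<in> borel_measurable M" and f_nonneg: "\<And>x. 0 \<le> f x"
  shows "(\<integral>\<^sup>+x. ennreal ((q1 x + q2 x) / 2 * f x) \<partial>M) * 2 =
    (\<integral>\<^sup>+x. ennreal (q1 x * f x) \<partial>M) + (\<integral>\<^sup>+x. ennreal (q2 x * f x) \<partial>M)"
proof -
  note [measurable] = densitiesD(1)[OF q1] densitiesD(1)[OF q2]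
  have "(\<integral>\<^sup>+x. ennreal ((q1 x + q2 x) / 2 * f x) \<partial>M) * 2 =
      (\<integral>\<^sup>+x. ennreal ((q1 x + q2 x) / 2 * f x) * 2 \<partial>M)"
    by (rule nn_integral_multc[symmetric]) measurable
  also have "\<dots> = (\<integral>\<^sup>+x. ennreal (q1 x * f x) + ennreal (q2 x * f x) \<partial>M)"
  proof (rule nn_integral_cong)
    fix x assume "x \<in> space M"
    then have "0 \<le> q1 x * f x" "0 \<le> q2 x * f x"
      using densitiesD(2)[OF q1] densitiesD(2)[OF q2] f_nonneg by auto
    then show "ennreal ((q1 x + q2 x) / 2 * f x) * 2 = ennreal (q1 x * f x) + ennreal (q2 x * f x)"
      by (simp add: algebra_simps flip: ennreal_numeral ennreal_mult ennreal_plus)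
  qed
  also have "\<dots> = (\<integral>\<^sup>+x. ennreal (q1 x * f x) \<partial>M) + (\<integral>\<^sup>+x. ennreal (q2 x * f x) \<partial>M)"
    by (rule nn_integral_add) measurable
  finally show ?thesis .
qed

lemma EQ_midpoint_ge:
  assumes "q1 \<in> densities M" "q2 \<in> densities M" and [measurable]: "X \<in> borel_measurable M"
  shows "min (EQ M q1 X) (EQ M q2 X) \<le> EQ M (\<lambda>x. (q1 x + q2 x) / 2) X"
  unfolding EQ_eq_pos_neg_diff
  by (intro pos_neg_diff_midpoint_ge nn_integral_midpoint_mult assms) auto

lemma determining_set_subset: "determining_set M u \<subseteq> densities M"
  unfolding determining_set_def by blast

lemma determining_set_midpoint:
  assumes q1: "q1 \<in> determining_set M u" and q2: "q2 \<in> determining_set M u"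
  shows "(\<lambda>x. (q1 x + q2 x) / 2) \<in> determining_set M u"
proof -
  have "u X \<le> EQ M (\<lambda>x. (q1 x + q2 x) / 2) X" if "X \<in> borel_measurable M" for X
  proof -
    have "u X \<le> min (EQ M q1 X) (EQ M q2 X)"
      using q1 q2 that by (simp add: determining_set_def)
    also have "\<dots> \<le> EQ M (\<lambda>x. (q1 x + q2 x) / 2) X"
      using q1 q2 that by (intro EQ_midpoint_ge) (auto simp: determining_set_def)
    finally show ?thesis .
  qed
  moreover have "(\<lambda>x. (q1 x + q2 x) / 2) \<in> densities M"
    using q1 q2 by (intro densities_midpoint) (auto simp: determining_set_def)
  ultimately show ?thesis by (simp add: determining_set_def)
qed

lemma coherent_utility_INF_determining_set:
  assumes "coherent_utility M u"
  shows "determining_set M u \<noteq> {}"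
    and "X \<in> borel_measurable M \<Longrightarrow> u X = (INF q\<in>determining_set M u. EQ M q X)"
proof -
  obtain D where D: "D \<subseteq> densities M" "D \<noteq> {}"
    and u: "\<And>X. X \<in> borel_measurable M \<Longrightarrow> u X = (INF q\<in>D. EQ M q X)"
    using assms unfolding coherent_utility_def by blast
  have sub: "D \<subseteq> determining_set M u"
    using D(1) u by (auto simp: determining_set_def intro: INF_lower)
  then show "determining_set M u \<noteq> {}" using D(2) by blast
  assume "X \<in> borel_measurable M"
  then have "u X \<le> (INF q\<in>determining_set M u. EQ M q X)" "u X = (INF q\<in>D. EQ M q X)"
    by (auto simp: determining_set_def u intro: INF_greatest)
  moreover have "(INF q\<in>determining_set M u. EQ M q X) \<le> (INF q\<in>D. EQ M q X)"
    by (rule INF_superset_mono[OF sub]) simp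
  ultimately show "u X = (INF q\<in>determining_set M u. EQ M q X)" by simp
qed

section \<open>Completeness of L^1\<close>

definition L1_Cauchy :: "'a measure \<Rightarrow> (nat \<Rightarrow> 'a \<Rightarrow> real) \<Rightarrow> bool" where
  "L1_Cauchy M p \<longleftrightarrow> (\<forall>e>0. \<exists>N. \<forall>n\<ge>N. \<forall>k\<ge>N. (\<integral>x. \<bar>p n x - p k x\<bar> \<partial>M) < e)"

lemma nn_integral_abs_le_of_AE_tendsto:
  fixes f :: "nat \<Rightarrow> 'a \<Rightarrow> real"
  assumes lim: "AE x in M. (\<lambda>i. f i x) \<longlonglongrightarrow> g x" and [measurable]: "\<And>i. f i \<in> borel_measurable M"
    and bound: "eventually (\<lambda>i. (\<integral>\<^sup>+x. ennreal \<bar>f i x\<bar> \<partial>M) \<le> B) sequentially"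
  shows "(\<integral>\<^sup>+x. ennreal \<bar>g x\<bar> \<partial>M) \<le> B"
proof -
  have "(\<integral>\<^sup>+x. ennreal \<bar>g x\<bar> \<partial>M) = (\<integral>\<^sup>+x. liminf (\<lambda>i. ennreal \<bar>f i x\<bar>) \<partial>M)"
  proof (rule nn_integral_cong_AE)
    show "AE x in M. ennreal \<bar>g x\<bar> = liminf (\<lambda>i. ennreal \<bar>f i x\<bar>)"
      using lim by eventually_elim (metis lim_imp_Liminf tendsto_ennrealI tendsto_rabs
          trivial_limit_sequentially)
  qed
  also have "\<dots> \<le> liminf (\<lambda>i. \<integral>\<^sup>+x. ennreal \<bar>f i x\<bar> \<partial>M)"
    by (rule nn_integral_liminf) measurable
  also have "\<dots> \<le> B"
    using bound by (intro Liminf_le) auto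
  finally show ?thesis .
qed

lemma L1_Cauchy_nn_integral_limit:
  fixes p :: "nat \<Rightarrow> 'a \<Rightarrow> real"
  assumes int: "\<And>n. integrable M (p n)" and Cauchy: "L1_Cauchy M p"
    and r: "strict_mono r" and lim: "AE x in M. (\<lambda>i. p (r i) x) \<longlonglongrightarrow> q x" and "0 < e"
  shows "\<exists>N. \<forall>n\<ge>N. (\<integral>\<^sup>+x. ennreal \<bar>p n x - q x\<bar> \<partial>M) \<le> ennreal e"
proof -
  obtain N where N: "\<And>n k. N \<le> n \<Longrightarrow> N \<le> k \<Longrightarrow> (\<integral>x. \<bar>p n x - p k x\<bar> \<partial>M) < e"
    using Cauchy \<open>0 < e\<close> unfolding L1_Cauchy_def by blast
  have "(\<integral>\<^sup>+x. ennreal \<bar>p n x - q x\<bar> \<partial>M) \<le> ennreal e" if "N \<le> n" for n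
  proof (rule nn_integral_abs_le_of_AE_tendsto)
    show "AE x in M. (\<lambda>i. p n x - p (r i) x) \<longlonglongrightarrow> p n x - q x"
      using lim by eventually_elim (intro tendsto_intros)
    show "eventually (\<lambda>i. (\<integral>\<^sup>+x. ennreal \<bar>p n x - p (r i) x\<bar> \<partial>M) \<le> ennreal e) sequentially"
      using eventually_ge_at_top[of N]
    proof eventually_elim
      case (elim i)
      then have "N \<le> r i" using seq_suble[OF r, of i] by linarith
      then show ?case
        using N[OF \<open>N \<le> n\<close>, of "r i"] int
        by (subst nn_integral_eq_integral) (auto intro!: ennreal_leI)
    qed
  qed (use int in measurable)
  then show ?thesis by blast
qed

lemma integral_less_of_nn_integral_less:
  fixes f :: "'a \<Rightarrow> real"
  assumes "f \<in> borel_measurable M" "AE x in M. 0 \<le> f x" "(\<integral>\<^sup>+x. ennreal (f x) \<partial>M) < ennreal e"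
  shows "(\<integral>x. f x \<partial>M) < e"
proof -
  have "(\<integral>\<^sup>+x. ennreal (f x) \<partial>M) < \<top>"
    using assms(3) by (simp add: less_trans)
  then show ?thesis
    using assms by (simp add: integral_eq_nn_integral enn2real_less_iff)
qed

lemma L1_Cauchy_converges:
  fixes p :: "nat \<Rightarrow> 'a \<Rightarrow> real"
  assumes int: "\<And>n. integrable M (p n)" and Cauchy: "L1_Cauchy M p"
  obtains q where "integrable M q" "(\<lambda>n. \<integral>x. \<bar>p n x - q x\<bar> \<partial>M) \<longlonglongrightarrow> 0"
proof -
  note [measurable] = borel_measurable_integrable[OF int]
  obtain r where r: "strict_mono r" "AE x in M. Cauchy (\<lambda>i. p (r i) x)"
  proof (rule cauchy_L1_AE_cauchy_subseq[of M p])
    show "\<exists>N. \<forall>i\<ge>N. \<forall>j\<ge>N. (\<integral>x. norm (p i x - p j x) \<partial>M) < e" if "0 < e" for e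
      using Cauchy that by (simp add: L1_Cauchy_def)
  qed (use int in auto)
  define q where "q x = lim (\<lambda>i. p (r i) x)" for x
  have [measurable]: "q \<in> borel_measurable M"
    unfolding q_def by measurable
  have "AE x in M. (\<lambda>i. p (r i) x) \<longlonglongrightarrow> q x"
    using r(2) by eventually_elim (simp add: q_def Cauchy_convergent_iff convergent_LIMSEQ_iff)
  note close = L1_Cauchy_nn_integral_limit[OF int Cauchy r(1) this]
  obtain N where "(\<integral>\<^sup>+x. ennreal \<bar>p N x - q x\<bar> \<partial>M) \<le> ennreal 1"
    using close[of 1] by auto
  then have "integrable M (\<lambda>x. p N x - q x)"
    by (intro integrableI_bounded) (auto simp: top_unique less_top[symmetric])
  from Bochner_Integration.integrable_diff[OF int[of N] this] have q_int: "integrable M q"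
    by simp
  have "(\<lambda>n. \<integral>x. \<bar>p n x - q x\<bar> \<partial>M) \<longlonglongrightarrow> 0"
  proof (rule LIMSEQ_I)
    fix e :: real assume "0 < e"
    then obtain N where N: "\<And>n. N \<le> n \<Longrightarrow> (\<integral>\<^sup>+x. ennreal \<bar>p n x - q x\<bar> \<partial>M) \<le> ennreal (e / 2)"
      using close[of "e / 2"] by auto
    have "(\<integral>x. \<bar>p n x - q x\<bar> \<partial>M) < e" if "N \<le> n" for n
    proof (rule integral_less_of_nn_integral_less)
      have "ennreal (e / 2) < ennreal e" using \<open>0 < e\<close> by (intro ennreal_lessI) auto
      then show "(\<integral>\<^sup>+x. ennreal \<bar>p n x - q x\<bar> \<partial>M) < ennreal e"
        by (rule le_less_trans[OF N[OF that]])
    qed auto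
    then show "\<exists>N. \<forall>n\<ge>N. norm ((\<integral>x. \<bar>p n x - q x\<bar> \<partial>M) - 0) < e"
      by auto
  qed
  with q_int that show ?thesis by blast
qed

section \<open>The Jensen gap of 1/(1+t)\<close>

definition jensen_gap :: "real \<Rightarrow> real \<Rightarrow> real" where
  "jensen_gap a b = (1 / (1 + a) + 1 / (1 + b)) / 2 - 1 / (1 + (a + b) / 2)"

lemma jensen_gap_eq:
  assumes "0 \<le> a" "0 \<le> b"
  shows "jensen_gap a b = (a - b)\<^sup>2 / (2 * (1 + a) * (1 + b) * (2 + a + b))"
proof -
  have "1 + (a + b) / 2 = (2 + a + b) / 2" by simp
  then show ?thesis
    using assms unfolding jensen_gap_def
    by (simp add: divide_simps) (simp add: power2_eq_square algebra_simps)
qed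

lemma jensen_gap_nonneg: "0 \<le> a \<Longrightarrow> 0 \<le> b \<Longrightarrow> 0 \<le> jensen_gap a b"
  by (simp add: jensen_gap_eq)

lemma jensen_gap_le_1: "0 \<le> a \<Longrightarrow> 0 \<le> b \<Longrightarrow> jensen_gap a b \<le> 1"
proof -
  assume "0 \<le> a" "0 \<le> b"
  then have "1 / (1 + a) \<le> 1" "1 / (1 + b) \<le> 1" by auto
  then have "(1 / (1 + a) + 1 / (1 + b)) / 2 \<le> 1" by simp
  moreover have "0 \<le> 1 / (1 + (a + b) / 2)" using \<open>0 \<le> a\<close> \<open>0 \<le> b\<close> by simp
  ultimately show ?thesis unfolding jensen_gap_def by linarith
qed

text \<open>On [0,N]^2 the gap is of order (a - b)^2, and |a - b| \<le> e + (a - b)^2 / e.\<close>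
lemma abs_diff_le_jensen_gap:
  fixes a b N e :: real
  assumes a: "0 \<le> a" and b: "0 \<le> b" and N: "0 \<le> N" and e: "0 < e"
  shows "\<bar>a - b\<bar> \<le> e + 4 * (1 + N) ^ 3 * jensen_gap a b / e
    + 2 * (if a > N then a else 0) + 2 * (if b > N then b else 0)"
proof (cases "a \<le> N \<and> b \<le> N")
  case True
  have "2 * (1 + a) * (1 + b) * (2 + a + b) \<le> 2 * (1 + N) * (1 + N) * (2 + N + N)"
    using True a b by (intro mult_mono) auto
  also have "\<dots> = 4 * (1 + N) ^ 3" by (simp add: power3_eq_cube algebra_simps)
  finally have denom: "2 * (1 + a) * (1 + b) * (2 + a + b) \<le> 4 * (1 + N) ^ 3" .
  have "(a - b)\<^sup>2 = 2 * (1 + a) * (1 + b) * (2 + a + b) * jensen_gap a b"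
    using a b by (simp add: jensen_gap_eq)
  also have "\<dots> \<le> 4 * (1 + N) ^ 3 * jensen_gap a b"
    using denom jensen_gap_nonneg[OF a b] by (rule mult_right_mono)
  finally have square: "(a - b)\<^sup>2 / e \<le> 4 * (1 + N) ^ 3 * jensen_gap a b / e"
    using e by (simp add: divide_right_mono)
  have "\<bar>a - b\<bar> \<le> e + (a - b)\<^sup>2 / e"
  proof (cases "\<bar>a - b\<bar> \<le> e")
    case True
    then show ?thesis using e by (simp add: add_increasing2)
  next
    case False
    then have "\<bar>a - b\<bar> * e \<le> \<bar>a - b\<bar> * \<bar>a - b\<bar>" using e by (intro mult_left_mono) auto
    then have "\<bar>a - b\<bar> \<le> (a - b)\<^sup>2 / e" using e by (simp add: field_simps power2_eq_square)
    then show ?thesis using e by linarith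
  qed
  then show ?thesis using square True by auto
next
  case False
  have "0 \<le> 4 * (1 + N) ^ 3 * jensen_gap a b / e"
    using jensen_gap_nonneg[OF a b] N e by auto
  moreover have "\<bar>a - b\<bar> \<le> 2 * (if a > N then a else 0) + 2 * (if b > N then b else 0)"
    using False a b by auto
  ultimately show ?thesis using e by linarith
qed

lemma (in finite_measure) integrable_recip_one_plus:
  fixes f :: "'a \<Rightarrow> real"
  assumes "f \<in> borel_measurable M" "\<And>x. x \<in> space M \<Longrightarrow> 0 \<le> f x"
  shows "integrable M (\<lambda>x. 1 / (1 + f x))"
proof (rule integrable_const_bound[where B = 1])
  show "AE x in M. norm (1 / (1 + f x)) \<le> 1"
    using assms(2) by (intro AE_I2) (simp add: divide_le_eq)
qed (use assms(1) in measurable)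

lemma (in finite_measure) integral_jensen_gap:
  fixes f g :: "'a \<Rightarrow> real"
  assumes [measurable]: "f \<in> borel_measurable M" "g \<in> borel_measurable M"
    and "\<And>x. x \<in> space M \<Longrightarrow> 0 \<le> f x" "\<And>x. x \<in> space M \<Longrightarrow> 0 \<le> g x"
  shows "(\<integral>x. jensen_gap (f x) (g x) \<partial>M) =
    ((\<integral>x. 1 / (1 + f x) \<partial>M) + (\<integral>x. 1 / (1 + g x) \<partial>M)) / 2 - (\<integral>x. 1 / (1 + (f x + g x) / 2) \<partial>M)"
  using integrable_recip_one_plus[of f] integrable_recip_one_plus[of g]
    integrable_recip_one_plus[of "\<lambda>x. (f x + g x) / 2"] assms
  unfolding jensen_gap_def by simp

lemma (in prob_space) L1_dist_le_jensen_gap: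
  assumes q1: "q1 \<in> densities M" and q2: "q2 \<in> densities M" and "0 \<le> N" "0 < \<eta>"
  shows "(\<integral>x. \<bar>q1 x - q2 x\<bar> \<partial>M) \<le> \<eta> + 4 * (1 + N) ^ 3 * (\<integral>x. jensen_gap (q1 x) (q2 x) \<partial>M) / \<eta>
    + 2 * (\<integral>x. (if q1 x > N then q1 x else 0) \<partial>M) + 2 * (\<integral>x. (if q2 x > N then q2 x else 0) \<partial>M)"
proof -
  note d1 = densitiesD[OF q1] and d2 = densitiesD[OF q2]
  note [measurable] = d1(1) d2(1)
  have int_tail: "integrable M (\<lambda>x. if q x > N then q x else 0)" if "q \<in> densities M" for q
  proof (rule Bochner_Integration.integrable_bound[OF densitiesD(3)[OF that]])
    note [measurable] = densitiesD(1)[OF that]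
    show "(\<lambda>x. if q x > N then q x else 0) \<in> borel_measurable M" by measurable
    show "AE x in M. norm (if q x > N then q x else 0) \<le> norm (q x)"
      using densitiesD(2)[OF that] by (intro AE_I2) auto
  qed
  have int_gap: "integrable M (\<lambda>x. jensen_gap (q1 x) (q2 x))"
  proof (rule integrable_const_bound[where B = 1])
    show "AE x in M. norm (jensen_gap (q1 x) (q2 x)) \<le> 1"
      using d1(2) d2(2) by (intro AE_I2) (simp add: jensen_gap_nonneg jensen_gap_le_1)
    show "(\<lambda>x. jensen_gap (q1 x) (q2 x)) \<in> borel_measurable M"
      unfolding jensen_gap_def by measurable
  qed
  have "(\<integral>x. \<bar>q1 x - q2 x\<bar> \<partial>M) \<le> (\<integral>x. \<eta> + 4 * (1 + N) ^ 3 * jensen_gap (q1 x) (q2 x) / \<eta>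
      + 2 * (if q1 x > N then q1 x else 0) + 2 * (if q2 x > N then q2 x else 0) \<partial>M)"
  proof (rule integral_mono)
    show "integrable M (\<lambda>x. \<bar>q1 x - q2 x\<bar>)" using d1(3) d2(3) by simp
    show "integrable M (\<lambda>x. \<eta> + 4 * (1 + N) ^ 3 * jensen_gap (q1 x) (q2 x) / \<eta>
        + 2 * (if q1 x > N then q1 x else 0) + 2 * (if q2 x > N then q2 x else 0))"
      using int_gap int_tail[OF q1] int_tail[OF q2] by simp
    show "\<bar>q1 x - q2 x\<bar> \<le> \<eta> + 4 * (1 + N) ^ 3 * jensen_gap (q1 x) (q2 x) / \<eta>
        + 2 * (if q1 x > N then q1 x else 0) + 2 * (if q2 x > N then q2 x else 0)" if "x \<in> space M" for x
      using d1(2)[OF that] d2(2)[OF that] assms(3,4) by (rule abs_diff_le_jensen_gap)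
  qed
  also have "\<dots> = \<eta> + 4 * (1 + N) ^ 3 * (\<integral>x. jensen_gap (q1 x) (q2 x) \<partial>M) / \<eta>
      + 2 * (\<integral>x. (if q1 x > N then q1 x else 0) \<partial>M) + 2 * (\<integral>x. (if q2 x > N then q2 x else 0) \<partial>M)"
    using int_gap int_tail[OF q1] int_tail[OF q2] by (simp add: prob_space)
  finally show ?thesis .
qed

section \<open>Uniform integrability\<close>

lemma SUP_tendsto_0_uniform_bound:
  fixes F :: "'q \<Rightarrow> nat \<Rightarrow> ennreal"
  assumes "(\<lambda>n. SUP q\<in>D. F q n) \<longlonglongrightarrow> 0" and "0 < e"
  shows "\<exists>N. \<forall>q\<in>D. F q N < ennreal e"
proof -
  have "eventually (\<lambda>n. (SUP q\<in>D. F q n) < ennreal e) sequentially"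
    using assms by (intro order_tendstoD(2)) auto
  then obtain N where "(SUP q\<in>D. F q N) < ennreal e"
    by (auto simp: eventually_sequentially)
  then show ?thesis by (auto dest: SUP_lessD)
qed

lemma mult_indicator_Collect: "(c :: real) * indicator {y. P y} x = (if P x then c else 0)"
  by (simp add: indicator_def)

lemma density_tail_uniform:
  assumes D: "D \<subseteq> densities M" and "unif_integrable M D" and "0 < e"
  shows "\<exists>N::nat. \<forall>q\<in>D. (\<integral>x. (if q x > real N then q x else 0) \<partial>M) < e"
proof -
  obtain N :: nat where N: "\<And>q. q \<in> D \<Longrightarrow>
      (\<integral>\<^sup>+x. ennreal (q x * indicator {y. q y > real N} x) \<partial>M) < ennreal e"
    using SUP_tendsto_0_uniform_bound[OF assms(2)[unfolded unif_integrable_def] \<open>0 < e\<close>] by blast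
  have "(\<integral>x. (if q x > real N then q x else 0) \<partial>M) < e" if q: "q \<in> D" for q
  proof (rule integral_less_of_nn_integral_less)
    have [measurable]: "q \<in> borel_measurable M" using densitiesD(1) q D by auto
    show "(\<lambda>x. if q x > real N then q x else 0) \<in> borel_measurable M" by measurable
    show "AE x in M. 0 \<le> (if q x > real N then q x else 0)"
      using densitiesD(2) q D by auto
    show "(\<integral>\<^sup>+x. ennreal (if q x > real N then q x else 0) \<partial>M) < ennreal e"
      using N[OF q] by (simp add: mult_indicator_Collect)
  qed
  then show ?thesis by blast
qed

lemma L1s_tail_uniform_nn:
  assumes "W \<in> L1s M D" and "0 < e"
  shows "\<exists>N::nat. \<forall>q\<in>D.
    (\<integral>\<^sup>+x. ennreal (if \<bar>W x\<bar> > real N then q x * \<bar>W x\<bar> else 0) \<partial>M) < ennreal e"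
proof -
  have "(\<lambda>n::nat. SUP q\<in>D. \<integral>\<^sup>+x. ennreal (q x * \<bar>W x\<bar> * indicator {y. \<bar>W y\<bar> > real n} x) \<partial>M)
      \<longlonglongrightarrow> 0"
    using assms(1) by (simp add: L1s_def)
  from SUP_tendsto_0_uniform_bound[OF this \<open>0 < e\<close>] show ?thesis
    by (simp add: mult_indicator_Collect)
qed

lemma L1s_density_mult_integrable:
  assumes D: "D \<subseteq> densities M" and W: "W \<in> L1s M D"
  obtains K where "\<And>q. q \<in> D \<Longrightarrow> integrable M (\<lambda>x. q x * W x)"
    and "\<And>q. q \<in> D \<Longrightarrow> (\<integral>x. \<bar>q x * W x\<bar> \<partial>M) \<le> K"
proof -
  have [measurable]: "W \<in> borel_measurable M" using W by (simp add: L1s_def)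
  obtain N :: nat where N: "\<And>q. q \<in> D \<Longrightarrow>
      (\<integral>\<^sup>+x. ennreal (if \<bar>W x\<bar> > real N then q x * \<bar>W x\<bar> else 0) \<partial>M) < ennreal 1"
    using L1s_tail_uniform_nn[OF W, of 1] by auto
  have *: "integrable M (\<lambda>x. q x * W x) \<and> (\<integral>x. \<bar>q x * W x\<bar> \<partial>M) \<le> real N + 1"
    if "q \<in> D" for q
  proof -
    note q = densitiesD[OF subsetD[OF D that]]
    note [measurable] = q(1)
    have "(\<integral>\<^sup>+x. ennreal \<bar>q x * W x\<bar> \<partial>M) \<le>
        (\<integral>\<^sup>+x. ennreal (real N * q x) + ennreal (if \<bar>W x\<bar> > real N then q x * \<bar>W x\<bar> else 0) \<partial>M)"
    proof (rule nn_integral_mono)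
      fix x assume "x \<in> space M"
      then have "\<bar>q x * W x\<bar> \<le> real N * q x + (if \<bar>W x\<bar> > real N then q x * \<bar>W x\<bar> else 0)"
        using q(2) mult_left_mono[of "\<bar>W x\<bar>" "real N" "q x"] by (auto simp: abs_mult mult.commute)
      with \<open>x \<in> space M\<close> show "ennreal \<bar>q x * W x\<bar> \<le>
          ennreal (real N * q x) + ennreal (if \<bar>W x\<bar> > real N then q x * \<bar>W x\<bar> else 0)"
        using q(2) by (simp add: ennreal_leI flip: ennreal_plus)
    qed
    also have "\<dots> = ennreal (real N) +
        (\<integral>\<^sup>+x. ennreal (if \<bar>W x\<bar> > real N then q x * \<bar>W x\<bar> else 0) \<partial>M)"
      using q by (simp add: nn_integral_add nn_integral_eq_integral)
    also have "\<dots> \<le> ennreal (real N + 1)"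
      using N[OF that] by (simp add: ennreal_plus)
    finally have bound: "(\<integral>\<^sup>+x. ennreal \<bar>q x * W x\<bar> \<partial>M) \<le> ennreal (real N + 1)" .
    then have "integrable M (\<lambda>x. q x * W x)"
      by (intro integrableI_bounded) (auto simp: top_unique less_top[symmetric])
    moreover have "(\<integral>x. \<bar>q x * W x\<bar> \<partial>M) \<le> real N + 1"
      using bound by (simp add: integral_eq_nn_integral enn2real_leI)
    ultimately show ?thesis ..
  qed
  then show ?thesis using that by blast
qed

lemma L1s_tail_uniform:
  assumes D: "D \<subseteq> densities M" and W: "W \<in> L1s M D" and "0 < e"
  shows "\<exists>N::nat. \<forall>q\<in>D. (\<integral>x. (if \<bar>W x\<bar> > real N then q x * \<bar>W x\<bar> else 0) \<partial>M) < e"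
proof -
  have [measurable]: "W \<in> borel_measurable M" using W by (simp add: L1s_def)
  obtain N :: nat where N: "\<And>q. q \<in> D \<Longrightarrow>
      (\<integral>\<^sup>+x. ennreal (if \<bar>W x\<bar> > real N then q x * \<bar>W x\<bar> else 0) \<partial>M) < ennreal e"
    using L1s_tail_uniform_nn[OF W \<open>0 < e\<close>] by auto
  have "(\<integral>x. (if \<bar>W x\<bar> > real N then q x * \<bar>W x\<bar> else 0) \<partial>M) < e" if q: "q \<in> D" for q
  proof (rule integral_less_of_nn_integral_less[OF _ _ N[OF q]])
    have [measurable]: "q \<in> borel_measurable M" using densitiesD(1) q D by auto
    show "(\<lambda>x. if \<bar>W x\<bar> > real N then q x * \<bar>W x\<bar> else 0) \<in> borel_measurable M" by measurable
    show "AE x in M. 0 \<le> (if \<bar>W x\<bar> > real N then q x * \<bar>W x\<bar> else 0)"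
      by (intro AE_I2) (simp add: densitiesD(2)[OF subsetD[OF D q]])
  qed
  then show ?thesis by blast
qed

lemma L1s_integral_bdd_below:
  assumes "D \<subseteq> densities M" and "W \<in> L1s M D"
  shows "bdd_below ((\<lambda>q. \<integral>x. q x * W x \<partial>M) ` D)"
proof -
  obtain K where K: "\<And>q. q \<in> D \<Longrightarrow> (\<integral>x. \<bar>q x * W x\<bar> \<partial>M) \<le> K"
    using L1s_density_mult_integrable[OF assms] by blast
  have "- K \<le> (\<integral>x. q x * W x \<partial>M)" if "q \<in> D" for q
    using integral_abs_bound[of M "\<lambda>x. q x * W x"] K[OF that] by linarith
  then show ?thesis by (auto intro!: bdd_belowI[of _ "- K"])
qed

lemma abs_diff_mult_le_truncation:
  fixes a b w N :: real
  assumes "0 \<le> a" "0 \<le> b" "0 \<le> N"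
  shows "\<bar>(a - b) * w\<bar> \<le> N * \<bar>a - b\<bar>
    + (if \<bar>w\<bar> > N then a * \<bar>w\<bar> else 0) + (if \<bar>w\<bar> > N then b * \<bar>w\<bar> else 0)"
proof (cases "\<bar>w\<bar> > N")
  case True
  have "\<bar>a - b\<bar> * \<bar>w\<bar> \<le> (a + b) * \<bar>w\<bar>" using assms by (intro mult_right_mono) auto
  moreover have "0 \<le> N * \<bar>a - b\<bar>" using assms by simp
  ultimately show ?thesis using True by (simp add: abs_mult distrib_right)
next
  case False
  then have "\<bar>a - b\<bar> * \<bar>w\<bar> \<le> \<bar>a - b\<bar> * N" by (intro mult_left_mono) auto
  then show ?thesis using False by (simp add: abs_mult mult.commute)
qed

lemma abs_integral_mult_diff_le_truncation:
  assumes q1: "q1 \<in> densities M" and q2: "q2 \<in> densities M" and [measurable]: "W \<in> borel_measurable M"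
    and int1: "integrable M (\<lambda>x. q1 x * W x)" and int2: "integrable M (\<lambda>x. q2 x * W x)" and "0 \<le> c"
  shows "\<bar>(\<integral>x. q1 x * W x \<partial>M) - (\<integral>x. q2 x * W x \<partial>M)\<bar> \<le> c * (\<integral>x. \<bar>q1 x - q2 x\<bar> \<partial>M)
    + (\<integral>x. (if \<bar>W x\<bar> > c then q1 x * \<bar>W x\<bar> else 0) \<partial>M)
    + (\<integral>x. (if \<bar>W x\<bar> > c then q2 x * \<bar>W x\<bar> else 0) \<partial>M)"
proof -
  note d1 = densitiesD[OF q1] and d2 = densitiesD[OF q2]
  have int_tail: "integrable M (\<lambda>x. if \<bar>W x\<bar> > c then q x * \<bar>W x\<bar> else 0)"
    if "q \<in> densities M" "integrable M (\<lambda>x. q x * W x)" for q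
  proof (rule Bochner_Integration.integrable_bound[OF that(2)])
    note [measurable] = densitiesD(1)[OF that(1)]
    show "(\<lambda>x. if \<bar>W x\<bar> > c then q x * \<bar>W x\<bar> else 0) \<in> borel_measurable M" by measurable
    show "AE x in M. norm (if \<bar>W x\<bar> > c then q x * \<bar>W x\<bar> else 0) \<le> norm (q x * W x)"
      using densitiesD(2)[OF that(1)] by (auto simp: abs_mult)
  qed
  note int_tails = int_tail[OF q1 int1] int_tail[OF q2 int2]
  have int_diff: "integrable M (\<lambda>x. \<bar>q1 x - q2 x\<bar>)"
    using d1(3) d2(3) by auto
  have int_diff_W: "integrable M (\<lambda>x. (q1 x - q2 x) * W x)"
    using int1 int2 by (simp add: left_diff_distrib)
  have "\<bar>(\<integral>x. q1 x * W x \<partial>M) - (\<integral>x. q2 x * W x \<partial>M)\<bar> = \<bar>\<integral>x. (q1 x - q2 x) * W x \<partial>M\<bar>"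
    using int1 int2 by (simp add: left_diff_distrib)
  also have "\<dots> \<le> (\<integral>x. \<bar>(q1 x - q2 x) * W x\<bar> \<partial>M)"
    by (rule integral_abs_bound)
  also have "\<dots> \<le> (\<integral>x. c * \<bar>q1 x - q2 x\<bar> + (if \<bar>W x\<bar> > c then q1 x * \<bar>W x\<bar> else 0)
      + (if \<bar>W x\<bar> > c then q2 x * \<bar>W x\<bar> else 0) \<partial>M)"
    using int_diff int_diff_W int_tails d1(2) d2(2) \<open>0 \<le> c\<close>
    by (intro integral_mono abs_diff_mult_le_truncation) auto
  also have "\<dots> = c * (\<integral>x. \<bar>q1 x - q2 x\<bar> \<partial>M)
      + (\<integral>x. (if \<bar>W x\<bar> > c then q1 x * \<bar>W x\<bar> else 0) \<partial>M)
      + (\<integral>x. (if \<bar>W x\<bar> > c then q2 x * \<bar>W x\<bar> else 0) \<partial>M)"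
    using int_diff int_tails by simp
  finally show ?thesis .
qed

lemma L1s_integral_mult_tendsto:
  assumes D: "D \<subseteq> densities M" and W: "W \<in> L1s M D"
    and p: "\<And>n. p n \<in> D" and q: "q \<in> D"
    and lim: "(\<lambda>n. \<integral>x. \<bar>p n x - q x\<bar> \<partial>M) \<longlonglongrightarrow> 0"
  shows "(\<lambda>n. \<integral>x. p n x * W x \<partial>M) \<longlonglongrightarrow> (\<integral>x. q x * W x \<partial>M)"
proof (rule LIMSEQ_I)
  fix e :: real assume "0 < e"
  have W_meas: "W \<in> borel_measurable M" using W by (simp add: L1s_def)
  obtain K where int_W: "\<And>q. q \<in> D \<Longrightarrow> integrable M (\<lambda>x. q x * W x)"
    using L1s_density_mult_integrable[OF D W] by blast
  obtain N :: nat where N: "\<And>r. r \<in> D \<Longrightarrow> (\<integral>x. (if \<bar>W x\<bar> > real N then r x * \<bar>W x\<bar> else 0) \<partial>M) < e / 3"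
    using L1s_tail_uniform[OF D W, of "e / 3"] \<open>0 < e\<close> by auto
  have "(\<lambda>n. real N * (\<integral>x. \<bar>p n x - q x\<bar> \<partial>M)) \<longlonglongrightarrow> real N * 0"
    by (intro tendsto_mult tendsto_const lim)
  then have "eventually (\<lambda>n. real N * (\<integral>x. \<bar>p n x - q x\<bar> \<partial>M) < e / 3) sequentially"
    using \<open>0 < e\<close> by (intro order_tendstoD(2)) auto
  then obtain n0 where n0: "\<And>n. n0 \<le> n \<Longrightarrow> real N * (\<integral>x. \<bar>p n x - q x\<bar> \<partial>M) < e / 3"
    by (auto simp: eventually_sequentially)
  show "\<exists>n0. \<forall>n\<ge>n0. norm ((\<integral>x. p n x * W x \<partial>M) - (\<integral>x. q x * W x \<partial>M)) < e"
  proof (intro exI allI impI)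
    fix n assume "n0 \<le> n"
    then show "norm ((\<integral>x. p n x * W x \<partial>M) - (\<integral>x. q x * W x \<partial>M)) < e"
      using abs_integral_mult_diff_le_truncation[OF subsetD[OF D p[of n]] subsetD[OF D q] W_meas
          int_W[OF p[of n]] int_W[OF q] of_nat_0_le_iff[of N]] n0[of n] N[OF p[of n]] N[OF q]
      unfolding real_norm_def by linarith
  qed
qed

section \<open>Existence of a minimizing density\<close>

lemma (in prob_space) L1_Cauchy_of_jensen_gap:
  assumes D: "D \<subseteq> densities M" and UI: "unif_integrable M D" and p: "\<And>n. p n \<in> D"
    and \<delta>: "\<delta> \<longlonglongrightarrow> 0" and gap: "\<And>n k. n \<le> k \<Longrightarrow> (\<integral>x. jensen_gap (p n x) (p k x) \<partial>M) \<le> \<delta> n"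
  shows "L1_Cauchy M p"
  unfolding L1_Cauchy_def
proof (intro allI impI)
  fix e :: real assume "0 < e"
  obtain N :: nat where N: "\<And>q. q \<in> D \<Longrightarrow> (\<integral>x. (if q x > real N then q x else 0) \<partial>M) < e / 16"
    using density_tail_uniform[OF D UI, of "e / 16"] \<open>0 < e\<close> by auto
  define C where "C = 4 * (1 + real N) ^ 3"
  have "0 < C" by (simp add: C_def)
  obtain n0 where n0: "\<And>n. n0 \<le> n \<Longrightarrow> \<delta> n < e * e / (16 * C)"
    using order_tendstoD(2)[OF \<delta>, of "e * e / (16 * C)"] \<open>0 < e\<close> \<open>0 < C\<close>
    by (auto simp: eventually_sequentially)
  have close: "(\<integral>x. \<bar>p n x - p k x\<bar> \<partial>M) < e" if "n0 \<le> n" "n \<le> k" for n k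
  proof -
    have "C * (\<integral>x. jensen_gap (p n x) (p k x) \<partial>M) / (e / 4) \<le> C * (e * e / (16 * C)) / (e / 4)"
      using gap[OF \<open>n \<le> k\<close>] n0[OF \<open>n0 \<le> n\<close>] \<open>0 < e\<close> \<open>0 < C\<close>
      by (intro divide_right_mono mult_left_mono) auto
    also have "\<dots> = e / 4" using \<open>0 < e\<close> \<open>0 < C\<close> by (simp add: field_simps)
    finally show ?thesis
      using L1_dist_le_jensen_gap[OF subsetD[OF D p] subsetD[OF D p], of "real N" "e / 4" n k]
        N[OF p[of n]] N[OF p[of k]] \<open>0 < e\<close>
      unfolding C_def by linarith
  qed
  show "\<exists>N. \<forall>n\<ge>N. \<forall>k\<ge>N. (\<integral>x. \<bar>p n x - p k x\<bar> \<partial>M) < e"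
  proof (intro exI allI impI)
    fix n k assume "n0 \<le> n" "n0 \<le> k"
    then show "(\<integral>x. \<bar>p n x - p k x\<bar> \<partial>M) < e"
      using close[of n k] close[of k n] by (cases "n \<le> k") (auto simp: abs_minus_commute)
  qed
qed

lemma nested_near_minimizers:
  fixes H :: "'b \<Rightarrow> real"
  assumes S: "\<And>n. S n \<noteq> {}" "decseq S" and bdd: "bdd_below (H ` S 0)" "bdd_above (H ` S 0)"
  obtains p \<delta> where "\<And>n. p n \<in> S n" "\<delta> \<longlonglongrightarrow> 0"
    "\<And>n k q. n \<le> k \<Longrightarrow> q \<in> S n \<Longrightarrow> (H (p n) + H (p k)) / 2 - H q \<le> \<delta> n"
proof -
  have S_sub: "S k \<subseteq> S n" if "n \<le> k" for n k
    using S(2) that by (simp add: decseq_def)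
  have bdd_n: "bdd_below (H ` S n)" for n
    using bdd_below_mono[OF bdd(1) image_mono[OF S_sub]] by simp
  define m where "m n = Inf (H ` S n)" for n
  define \<epsilon> :: "nat \<Rightarrow> real" where "\<epsilon> n = 1 / Suc n" for n
  have m_le: "m n \<le> H q" if "q \<in> S n" for n q
    unfolding m_def using that bdd_n by (intro cInf_lower) auto
  have "incseq m"
    unfolding incseq_def m_def using S(1) S_sub bdd_n
    by (auto intro!: cInf_superset_mono image_mono)
  have "\<exists>q\<in>S n. H q < m n + \<epsilon> n" for n
  proof -
    have "Inf (H ` S n) < m n + \<epsilon> n" unfolding m_def \<epsilon>_def by simp
    then show ?thesis using S(1) bdd_n by (simp add: cInf_less_iff)
  qed
  then obtain p where p: "\<And>n. p n \<in> S n" and p_H: "\<And>n. H (p n) < m n + \<epsilon> n"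
    by metis
  obtain B where B: "\<And>q. q \<in> S 0 \<Longrightarrow> H q \<le> B"
    using bdd(2) by (auto simp: bdd_above_def)
  have "\<forall>n. m n \<le> B"
    using m_le[OF p] B[OF subsetD[OF S_sub p]] by (metis order_trans zero_le)
  with \<open>incseq m\<close> obtain L where L: "m \<longlonglongrightarrow> L" "\<And>n. m n \<le> L"
    by (rule incseq_convergent) blast
  define \<delta> where "\<delta> n = (L - m n) + \<epsilon> n" for n
  have "\<delta> \<longlonglongrightarrow> (L - L) + 0"
    unfolding \<delta>_def \<epsilon>_def
    by (intro tendsto_intros L(1) LIMSEQ_inverse_real_of_nat[unfolded inverse_eq_divide])
  then have "\<delta> \<longlonglongrightarrow> 0" by simp
  moreover have "(H (p n) + H (p k)) / 2 - H q \<le> \<delta> n" if "n \<le> k" "q \<in> S n" for n k q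
  proof -
    have "\<epsilon> k \<le> \<epsilon> n" using \<open>n \<le> k\<close> by (simp add: \<epsilon>_def frac_le)
    then show ?thesis
      using p_H[of n] p_H[of k] L(2)[of k] incseqD[OF \<open>incseq m\<close> \<open>n \<le> k\<close>] m_le[OF \<open>q \<in> S n\<close>]
      unfolding \<delta>_def by argo
  qed
  ultimately show ?thesis using that[OF p] by blast
qed

lemma (in prob_space) nested_midpoint_convex_L1_Cauchy:
  assumes D: "D \<subseteq> densities M" and UI: "unif_integrable M D"
    and S: "\<And>n. S n \<subseteq> D" "\<And>n. S n \<noteq> {}" "decseq S"
    and mid: "\<And>n q1 q2. q1 \<in> S n \<Longrightarrow> q2 \<in> S n \<Longrightarrow> (\<lambda>x. (q1 x + q2 x) / 2) \<in> S n"
  obtains p where "\<And>n. p n \<in> S n" "L1_Cauchy M p"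
proof -
  define H where "H q = (\<integral>x. 1 / (1 + q x) \<partial>M)" for q :: "'a \<Rightarrow> real"
  note dens = densitiesD[OF subsetD[OF D subsetD[OF S(1)]]]
  have "0 \<le> H q \<and> H q \<le> 1" if "q \<in> S 0" for q
    using integrable_recip_one_plus[OF dens(1,2)[OF that]] dens(2)[OF that] unfolding H_def
    by (auto intro!: integral_nonneg_AE integral_le_const simp: divide_le_eq)
  then have "bdd_below (H ` S 0)" "bdd_above (H ` S 0)"
    by (auto intro!: bdd_belowI[of _ 0] bdd_aboveI[of _ 1])
  then obtain p \<delta> where p: "\<And>n. p n \<in> S n" and "\<delta> \<longlonglongrightarrow> 0"
    and near_min: "\<And>n k q. n \<le> k \<Longrightarrow> q \<in> S n \<Longrightarrow> (H (p n) + H (p k)) / 2 - H q \<le> \<delta> n"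
    using nested_near_minimizers[OF S(2,3)] by blast
  have "(\<integral>x. jensen_gap (p n x) (p k x) \<partial>M) \<le> \<delta> n" if "n \<le> k" for n k
  proof -
    have "p k \<in> S n" using p[of k] S(3) \<open>n \<le> k\<close> by (auto simp: decseq_def)
    have "(\<integral>x. jensen_gap (p n x) (p k x) \<partial>M) = (H (p n) + H (p k)) / 2 - H (\<lambda>x. (p n x + p k x) / 2)"
      unfolding H_def using dens(1,2)[OF p] by (intro integral_jensen_gap) auto
    also have "\<dots> \<le> \<delta> n"
      using near_min[OF \<open>n \<le> k\<close> mid[OF p \<open>p k \<in> S n\<close>]] .
    finally show ?thesis .
  qed
  then have "L1_Cauchy M p"
    using L1_Cauchy_of_jensen_gap[OF D UI] p S(1) \<open>\<delta> \<longlonglongrightarrow> 0\<close> by blast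
  with p that show ?thesis by blast
qed

lemma L1_closed_Cauchy_converges:
  assumes closed: "L1_closed M D" and D: "D \<subseteq> densities M"
    and p: "\<And>n. p n \<in> D" and "L1_Cauchy M p"
  obtains q where "q \<in> D" "(\<lambda>n. \<integral>x. \<bar>p n x - q x\<bar> \<partial>M) \<longlonglongrightarrow> 0"
proof -
  note dens = densitiesD[OF subsetD[OF D]]
  obtain q where "integrable M q" and p_q: "(\<lambda>n. \<integral>x. \<bar>p n x - q x\<bar> \<partial>M) \<longlonglongrightarrow> 0"
    using L1_Cauchy_converges[OF dens(3)[OF p] \<open>L1_Cauchy M p\<close>] .
  then obtain q' where q': "q' \<in> D" "AE x in M. q' x = q x"
    using closed p unfolding L1_closed_def by blast
  have "(\<integral>x. \<bar>p n x - q' x\<bar> \<partial>M) = (\<integral>x. \<bar>p n x - q x\<bar> \<partial>M)" for n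
    using q'(2) dens(1)[OF p] dens(1)[OF q'(1)] borel_measurable_integrable[OF \<open>integrable M q\<close>]
    by (intro integral_cong_AE) auto
  with p_q q'(1) that show ?thesis by simp
qed

lemma (in prob_space) L1s_integral_minimum_attained:
  assumes D: "D \<subseteq> densities M" "D \<noteq> {}"
    and mid: "\<And>q1 q2. q1 \<in> D \<Longrightarrow> q2 \<in> D \<Longrightarrow> (\<lambda>x. (q1 x + q2 x) / 2) \<in> D"
    and UI: "unif_integrable M D" and closed: "L1_closed M D" and W: "W \<in> L1s M D"
  obtains q where "q \<in> D" "\<And>q'. q' \<in> D \<Longrightarrow> (\<integral>x. q x * W x \<partial>M) \<le> (\<integral>x. q' x * W x \<partial>M)"
proof -
  define I where "I q = (\<integral>x. q x * W x \<partial>M)" for q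
  obtain K where int_W: "\<And>q. q \<in> D \<Longrightarrow> integrable M (\<lambda>x. q x * W x)"
    using L1s_density_mult_integrable[OF D(1) W] by blast
  have bdd: "bdd_below (I ` D)"
    unfolding I_def by (rule L1s_integral_bdd_below[OF D(1) W])
  define c where "c = Inf (I ` D)"
  have c_le: "c \<le> I q" if "q \<in> D" for q
    unfolding c_def using bdd that by (intro cInf_lower) auto
  define S where "S n = {q \<in> D. I q \<le> c + 1 / Suc n}" for n
  have S_nonempty: "S n \<noteq> {}" for n
  proof -
    have "Inf (I ` D) < c + 1 / Suc n" unfolding c_def by simp
    then show ?thesis using D(2) bdd by (auto simp: cInf_less_iff S_def)
  qed
  have "decseq S"
    unfolding decseq_def S_def by (auto intro: order_trans[OF _ add_left_mono[OF frac_le]])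
  have S_mid: "(\<lambda>x. (q1 x + q2 x) / 2) \<in> S n" if "q1 \<in> S n" "q2 \<in> S n" for n q1 q2
  proof -
    have "q1 \<in> D" "q2 \<in> D" "I q1 \<le> c + 1 / Suc n" "I q2 \<le> c + 1 / Suc n"
      using that by (auto simp: S_def)
    moreover from this have "I (\<lambda>x. (q1 x + q2 x) / 2) = (I q1 + I q2) / 2"
      using int_W unfolding I_def by (simp add: add_divide_distrib distrib_right)
    ultimately show ?thesis using mid unfolding S_def by auto
  qed
  obtain p where p: "\<And>n. p n \<in> S n" and "L1_Cauchy M p"
    using nested_midpoint_convex_L1_Cauchy[OF D(1) UI _ S_nonempty \<open>decseq S\<close> S_mid]
    by (auto simp: S_def)
  then have pD: "p n \<in> D" and pI: "I (p n) \<le> c + 1 / Suc n" for n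
    using p[of n] by (auto simp: S_def)
  obtain q where q: "q \<in> D" "(\<lambda>n. \<integral>x. \<bar>p n x - q x\<bar> \<partial>M) \<longlonglongrightarrow> 0"
    using L1_closed_Cauchy_converges[OF closed D(1) pD \<open>L1_Cauchy M p\<close>] .
  have "(\<lambda>n. I (p n)) \<longlonglongrightarrow> I q"
    unfolding I_def by (rule L1s_integral_mult_tendsto[OF D(1) W pD q])
  moreover have "(\<lambda>n. c + 1 / Suc n) \<longlonglongrightarrow> c + 0"
    by (intro tendsto_intros LIMSEQ_inverse_real_of_nat[unfolded inverse_eq_divide])
  ultimately have "I q \<le> c"
    using pI by (intro LIMSEQ_le) auto
  then show ?thesis
    using that q(1) c_le unfolding I_def by force
qed

theorem proposition5p2:
  fixes M :: "'a measure" and u :: "('a \<Rightarrow> real) \<Rightarrow> ereal" and W :: "'a \<Rightarrow> real"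
  assumes "prob_space M"
    and "coherent_utility M u"
    and "L1_closed M (determining_set M u)"
    and "unif_integrable M (determining_set M u)"
    and "W \<in> L1s M (determining_set M u)"
  shows "extreme_measures M u (determining_set M u) W \<noteq> {}"
proof -
  interpret prob_space M by fact
  let ?D = "determining_set M u"
  have D: "?D \<subseteq> densities M" "?D \<noteq> {}"
    using determining_set_subset coherent_utility_INF_determining_set(1)[OF assms(2)] .
  obtain q where q: "q \<in> ?D" and q_min: "\<And>q'. q' \<in> ?D \<Longrightarrow> (\<integral>x. q x * W x \<partial>M) \<le> (\<integral>x. q' x * W x \<partial>M)"
    using L1s_integral_minimum_attained[OF D determining_set_midpoint assms(4,3,5)] by blast
  obtain K where "\<And>q'. q' \<in> ?D \<Longrightarrow> integrable M (\<lambda>x. q' x * W x)"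
    using L1s_density_mult_integrable[OF D(1) assms(5)] by blast
  then have EQ: "EQ M q' W = ereal (\<integral>x. q' x * W x \<partial>M)" if "q' \<in> ?D" for q'
    using EQ_eq_integral[OF subsetD[OF D(1) that]] that by blast
  have "u W = (INF q'\<in>?D. EQ M q' W)"
    using coherent_utility_INF_determining_set(2)[OF assms(2)] assms(5) by (simp add: L1s_def)
  also have "\<dots> = EQ M q W"
    using q q_min EQ by (intro antisym INF_lower INF_greatest) auto
  finally show ?thesis
    using q EQ[OF q] unfolding extreme_measures_def by auto
qed

end
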